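(* Let $(z,z')$ be admissible with $t=zz'=1$. Then $$\sigma^{(zz')}_1=\phi_{z,-z}*\phi^{(-)}_{-z',z'},$$ the (additive) convolution of a distribution supported on $[0,1]$ and a distribution supported on $[-1,0]$.
   Context: $\sigma^{(zz')}_1$ is the unique measure on $[-1,1]$ with moments $\int x^l\sigma^{(zz')}_1(dx)=\sum_{p+q=l,\ p,q\ge0}\frac{(-1)^q\,t\,(z+1)_p(-z+1)_q(z'+1)_p(-z'+1)_q}{(t)_{p+q+1}(p+q+1)p!q!}$, $l\ge0$ (it is the first controlling measure of the spectral $z$-measure $P_{zz'}$). Admissible parameters: either $z'=\bar z$, $z\notin\mathbb Z$, or $z,z'$ real in a common interval $(m,m+1)$, $m\in\mathbb Z$. For $a\in\mathbb C$, $\phi_a(u)=u_+^a/\Gamma(a+1)$ is the distribution on $\mathbb R$ supported on $[0,\infty)$, defined for $\operatorname{Re}a>-1$ as a locally integrable function and for other $a$ by analytic continuation in $a$. For $a,b\in\mathbb C$, $\phi_{ab}(u)=\phi_a(u)\phi_b(1-u)$ (a distribution supported on $[0,1]$), and $\phi^{(-)}_{ab}(u)=\phi_{ab}(-u)$ (supported on $[-1,0]$). *)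

theory Defs
  imports "HOL-Analysis.Analysis"
begin

definition admissible :: "complex \<Rightarrow> complex \<Rightarrow> bool" where
  "admissible z z' \<longleftrightarrow>
     (z' = cnj z \<and> z \<notin> \<int>) \<or>
     (z \<in> \<real> \<and> z' \<in> \<real> \<and>
      (\<exists>m::int. of_int m < Re z \<and> Re z < of_int m + 1 \<and>
                 of_int m < Re z' \<and> Re z' < of_int m + 1))"

text \<open>The l-th moment of the first controlling measure, with t = z z'.\<close>
definition sigma1_moment :: "complex \<Rightarrow> complex \<Rightarrow> nat \<Rightarrow> complex" where
  "sigma1_moment z z' l =
     (let t = z * z' in
      \<Sum>p = 0..l. let q = l - p in
        ((-1) ^ q * t * pochhammer (z + 1) p * pochhammer (- z + 1) q
            * pochhammer (z' + 1) p * pochhammer (- z' + 1) q)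
        / (pochhammer t (p + q + 1) * of_nat (p + q + 1) * fact p * fact q))"

definition phi :: "complex \<Rightarrow> real \<Rightarrow> complex" where
  "phi a u = (if 0 < u then (complex_of_real u) powr a * rGamma (a + 1) else 0)"

definition phi2 :: "complex \<Rightarrow> complex \<Rightarrow> real \<Rightarrow> complex" where
  "phi2 a b u = phi a u * phi b (1 - u)"

definition phi2_minus :: "complex \<Rightarrow> complex \<Rightarrow> real \<Rightarrow> complex" where
  "phi2_minus a b u = phi2 a b (- u)"

definition conv :: "(real \<Rightarrow> complex) \<Rightarrow> (real \<Rightarrow> complex) \<Rightarrow> real \<Rightarrow> complex" where
  "conv f g x = (LINT u|lborel. f u * g (x - u))"

definition test_function :: "(real \<Rightarrow> complex) \<Rightarrow> bool" where
  "test_function \<psi> \<longleftrightarrow>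
     (\<exists>D :: nat \<Rightarrow> real \<Rightarrow> complex. D 0 = \<psi> \<and>
        (\<forall>k x. (D k has_vector_derivative D (Suc k) x) (at x))) \<and>
     bounded {x. \<psi> x \<noteq> 0}"

end

theory Submission
  imports Defs "HOL-Complex_Analysis.Cauchy_Integral_Theorem"
begin

(* Since phi^(-)_{-z',z'} is phi_{z',-z'} translated by -1, a point of the support of the convolution
   is x = u + w - 1 with u, w in [0,1], and u + w - 1 = u w - (1 - u)(1 - w).  Expanding the l-th
   power binomially and integrating factor by factor, the l-th moment of the convolution becomes
   sum_p C(l,p) (-1)^(l-p) M_z(p, l-p) M_z'(p, l-p), where
   M_w(k, m) = int u^k (1-u)^m phi_{w,-w}(u) du = (1+w)_k (1-w)_m / (k+m+1)!
   is a Beta integral; for t = 1 this is the l-th moment of sigma_1.  Admissibility together with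
   z z' = 1 forces z' = conj z and |Re z| < 1, which makes all these integrals converge.  Both sides
   live on [-1,1], so equal moments give equal integrals of every continuous function by the
   Weierstrass approximation theorem. *)

lemma integrable_bounded_mult:
  fixes f h :: "'a \<Rightarrow> complex"
  assumes h: "integrable M h" and f: "f \<in> borel_measurable M"
    and bound: "\<And>x. x \<in> space M \<Longrightarrow> h x \<noteq> 0 \<Longrightarrow> norm (f x) \<le> C"
  shows "integrable M (\<lambda>x. f x * h x)"
proof (rule Bochner_Integration.integrable_bound)
  show "integrable M (\<lambda>x. C * norm (h x))"
    using h by simp
  show "AE x in M. norm (f x * h x) \<le> norm (C * norm (h x))"
  proof (rule AE_I2)
    fix x assume "x \<in> space M"
    then show "norm (f x * h x) \<le> norm (C * norm (h x))"
      using bound[of x] mult_right_mono[of "norm (f x)" C "norm (h x)"]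
      by (cases "h x = 0") (auto simp: norm_mult intro: order_trans[OF _ abs_ge_self])
  qed
qed (use h f in simp)

section \<open>Convolution on the real line\<close>

lemma integrable_conv_integrand:
  fixes f g :: "real \<Rightarrow> complex"
  assumes f: "integrable lborel f" and g: "integrable lborel g"
  shows "integrable (lborel \<Otimes>\<^sub>M lborel) (\<lambda>(u, x). f u * g (x - u))"
proof (rule lborel_pair.Fubini_integrable)
  have "(\<integral>x. norm (f u * g (x - u)) \<partial>lborel) = norm (f u) * (\<integral>v. norm (g v) \<partial>lborel)" for u
    using lborel_integral_real_affine[of 1 "\<lambda>v. norm (g v)" "-u"] by (simp add: norm_mult)
  then show "integrable lborel (\<lambda>u. \<integral>x. norm (case (u, x) of (u, x) \<Rightarrow> f u * g (x - u)) \<partial>lborel)"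
    using f by simp
  have "integrable lborel (\<lambda>x. g (x - u))" for u
    using lborel_integrable_real_affine[OF g, of 1 "-u"] by simp
  then show "AE u in lborel. integrable lborel (\<lambda>x. case (u, x) of (u, x) \<Rightarrow> f u * g (x - u))"
    by simp
  show "(\<lambda>(u, x). f u * g (x - u)) \<in> borel_measurable (lborel \<Otimes>\<^sub>M lborel)"
    using f g by measurable
qed

lemma integral_mult_conv:
  fixes f g h :: "real \<Rightarrow> complex"
  assumes f: "integrable lborel f" and g: "integrable lborel g" and h: "h \<in> borel_measurable borel"
    and bound: "\<And>u v. f u \<noteq> 0 \<Longrightarrow> g v \<noteq> 0 \<Longrightarrow> norm (h (u + v)) \<le> C"
  shows "integrable lborel (\<lambda>x. h x * conv f g x)"
    and "(LINT x|lborel. h x * conv f g x) = (LINT u|lborel. f u * (LINT v|lborel. h (u + v) * g v))"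
proof -
  let ?k = "\<lambda>(u, x). h x * (f u * g (x - u))"
  have "integrable (lborel \<Otimes>\<^sub>M lborel)
      (\<lambda>p. (case p of (u, x) \<Rightarrow> h x) * (case p of (u, x) \<Rightarrow> f u * g (x - u)))"
  proof (rule integrable_bounded_mult[OF integrable_conv_integrand[OF f g]])
    show "(\<lambda>(u, x). h x) \<in> borel_measurable (lborel \<Otimes>\<^sub>M lborel)"
      using h by measurable
    show "norm (case p of (u, x) \<Rightarrow> h x) \<le> C" if "(case p of (u, x) \<Rightarrow> f u * g (x - u)) \<noteq> 0" for p
      using that bound[of "fst p" "snd p - fst p"] by (auto simp: case_prod_unfold)
  qed
  then have k: "integrable (lborel \<Otimes>\<^sub>M lborel) ?k"
    by (simp add: case_prod_unfold)
  have conv_eq: "h x * conv f g x = (LINT u|lborel. ?k (u, x))" for x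
    by (simp add: conv_def)
  show "integrable lborel (\<lambda>x. h x * conv f g x)"
    unfolding conv_eq using lborel_pair.integrable_snd[OF k] by simp
  have "(LINT x|lborel. h x * conv f g x) = (LINT u|lborel. LINT x|lborel. ?k (u, x))"
    unfolding conv_eq using lborel_pair.Fubini_integral[OF k] by simp
  also have "\<dots> = (LINT u|lborel. f u * (LINT v|lborel. h (u + v) * g v))"
  proof (rule Bochner_Integration.integral_cong[OF refl])
    fix u
    have "(LINT x|lborel. h x * g (x - u)) = (LINT v|lborel. h (u + v) * g v)"
      using lborel_integral_real_affine[of 1 "\<lambda>x. h x * g (x - u)" u] by simp
    then show "(LINT x|lborel. ?k (u, x)) = f u * (LINT v|lborel. h (u + v) * g v)"
      by (simp add: algebra_simps)
  qed
  finally show "(LINT x|lborel. h x * conv f g x) = (LINT u|lborel. f u * (LINT v|lborel. h (u + v) * g v))" .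
qed

lemma
  fixes f g :: "real \<Rightarrow> complex"
  assumes "integrable lborel f" "integrable lborel g"
  shows integrable_conv: "integrable lborel (conv f g)"
    and integral_conv: "integral\<^sup>L lborel (conv f g) = integral\<^sup>L lborel f * integral\<^sup>L lborel g"
  using integral_mult_conv[OF assms, of "\<lambda>_. 1" 1] by (simp_all add: mult.commute)

lemma conv_nonzero_imp:
  assumes "conv f g x \<noteq> 0"
  obtains u where "f u \<noteq> 0" "g (x - u) \<noteq> 0"
proof -
  have "\<exists>u. f u * g (x - u) \<noteq> 0"
  proof (rule ccontr)
    assume "\<not> (\<exists>u. f u * g (x - u) \<noteq> 0)"
    then have "(\<lambda>u. f u * g (x - u)) = (\<lambda>_. 0)"
      by auto
    then show False
      using assms by (simp add: conv_def)
  qed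
  then show thesis
    using that by auto
qed

lemma conv_shift: "conv f (\<lambda>v. g (v + c)) x = conv f g (x + c)"
  by (simp add: conv_def algebra_simps)

section \<open>The Beta integral for complex parameters\<close>

definition gamma_kernel :: "complex \<Rightarrow> real \<Rightarrow> complex" where
  "gamma_kernel a t = indicator {0<..} t *\<^sub>R (of_real t powr (a - 1) / of_real (exp t))"

definition beta_kernel :: "complex \<Rightarrow> complex \<Rightarrow> real \<Rightarrow> complex" where
  "beta_kernel a b x = indicator {0<..<1} x *\<^sub>R (of_real x powr (a - 1) * of_real (1 - x) powr (b - 1))"

lemma gamma_kernel_measurable [measurable]: "gamma_kernel a \<in> borel_measurable borel"
  unfolding gamma_kernel_def by measurable

lemma beta_kernel_measurable [measurable]: "beta_kernel a b \<in> borel_measurable borel"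
  unfolding beta_kernel_def by measurable

lemma
  assumes "0 < Re a"
  shows integrable_gamma_kernel: "integrable lborel (gamma_kernel a)"
    and integral_gamma_kernel: "integral\<^sup>L lborel (gamma_kernel a) = Gamma a"
proof -
  have A: "set_integrable lebesgue {0<..} (\<lambda>t. of_real t powr (a - 1) / of_real (exp t))"
    using absolutely_integrable_Gamma_integral'[OF assms] .
  then have "integrable lebesgue (gamma_kernel a)"
    unfolding set_integrable_def gamma_kernel_def .
  then show "integrable lborel (gamma_kernel a)"
    by (subst (asm) integrable_completion) auto
  have "integral\<^sup>L lebesgue (gamma_kernel a) = Gamma a"
    using set_lebesgue_integral_eq_integral(2)[OF A] Gamma_integral_complex'[OF assms]
    unfolding set_lebesgue_integral_def gamma_kernel_def by (simp add: integral_unique)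
  then show "integral\<^sup>L lborel (gamma_kernel a) = Gamma a"
    by (subst (asm) integral_completion) auto
qed

lemma integrable_beta_kernel:
  assumes "0 < Re a" "0 < Re b"
  shows "integrable lborel (beta_kernel a b)"
proof (rule Bochner_Integration.integrable_bound)
  show "integrable lborel (\<lambda>x. indicator {0..1} x *\<^sub>R (x powr (Re a - 1) * (1 - x) powr (Re b - 1)))"
    using integrable_Beta[of "Re a" "Re b"] assms unfolding set_integrable_def by simp
  show "AE x in lborel. norm (beta_kernel a b x)
          \<le> norm (indicator {0..1} x *\<^sub>R (x powr (Re a - 1) * (1 - x) powr (Re b - 1)))"
    by (intro AE_I2)
      (auto simp: beta_kernel_def indicator_def norm_mult norm_powr_real_powr simp del: of_real_diff)
qed simp

lemma gamma_kernel_mult_eq_beta_kernel: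
  assumes "0 < u"
  shows "gamma_kernel a (u * x) * gamma_kernel b (u - u * x)
           = beta_kernel a b x * (of_real u powr (a + b - 2) / of_real (exp u))"
proof (cases "0 < x \<and> x < 1")
  case True
  have pos: "0 < u * x" "0 < u - u * x"
    using True assms by (auto simp: algebra_simps)
  have "of_real (u * x) powr (a - 1) = of_real u powr (a - 1) * of_real x powr (a - 1)"
    using True assms by (simp add: powr_times_real)
  moreover have "of_real (u - u * x) powr (b - 1) = of_real u powr (b - 1) * of_real (1 - x) powr (b - 1)"
    using True assms powr_times_real[of "of_real u" "of_real (1 - x)" "b - 1"]
    by (simp add: algebra_simps)
  moreover have "of_real (exp (u * x)) * of_real (exp (u - u * x)) = (of_real (exp u) :: complex)"
    by (simp flip: of_real_mult exp_add)
  moreover have "of_real u powr (a - 1) * of_real u powr (b - 1) = (of_real u powr (a + b - 2) :: complex)"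
    by (simp flip: powr_add)
  ultimately show ?thesis
    using True pos unfolding gamma_kernel_def beta_kernel_def
    by (simp del: of_real_diff of_real_mult add: field_simps)
next
  case False
  then have "u * x \<le> 0 \<or> u - u * x \<le> 0"
    using assms by (auto simp: not_less mult_le_cancel_left1 mult_nonneg_nonpos)
  then show ?thesis
    using False unfolding gamma_kernel_def beta_kernel_def by auto
qed

lemma conv_gamma_kernel:
  "conv (gamma_kernel a) (gamma_kernel b) u = integral\<^sup>L lborel (beta_kernel a b) * gamma_kernel (a + b) u"
proof (cases "0 < u")
  case False
  then have "(\<lambda>t. gamma_kernel a t * gamma_kernel b (u - t)) = (\<lambda>_. 0)"
    by (simp add: gamma_kernel_def indicator_def fun_eq_iff)
  then have "conv (gamma_kernel a) (gamma_kernel b) u = 0"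
    by (simp add: conv_def)
  moreover have "gamma_kernel (a + b) u = 0"
    using False by (simp add: gamma_kernel_def)
  ultimately show ?thesis
    by simp
next
  case True
  have "conv (gamma_kernel a) (gamma_kernel b) u
          = u *\<^sub>R (LINT x|lborel. gamma_kernel a (u * x) * gamma_kernel b (u - u * x))"
    using lborel_integral_real_affine[of u "\<lambda>t. gamma_kernel a t * gamma_kernel b (u - t)" 0] True
    by (simp add: conv_def)
  also have "\<dots> = integral\<^sup>L lborel (beta_kernel a b) * (of_real u * of_real u powr (a + b - 2) / of_real (exp u))"
    by (simp add: gamma_kernel_mult_eq_beta_kernel True scaleR_conv_of_real)
  also have "\<dots> = integral\<^sup>L lborel (beta_kernel a b) * (of_real u powr (a + b - 1) / of_real (exp u))"
    using powr_add[of "of_real u :: complex" 1 "a + b - 2"] by simp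
  also have "\<dots> = integral\<^sup>L lborel (beta_kernel a b) * gamma_kernel (a + b) u"
    using True by (simp add: gamma_kernel_def)
  finally show ?thesis .
qed

lemma Re_pos_not_nonpos_Ints: "0 < Re z \<Longrightarrow> z \<notin> \<int>\<^sub>\<le>\<^sub>0"
  using nonpos_Ints_subset_nonpos_Reals complex_nonpos_Reals_iff by fastforce

lemma integral_beta_kernel:
  assumes a: "0 < Re a" and b: "0 < Re b"
  shows "integral\<^sup>L lborel (beta_kernel a b) = Beta a b"
proof -
  have "Gamma a * Gamma b = integral\<^sup>L lborel (conv (gamma_kernel a) (gamma_kernel b))"
    using a b by (simp add: integral_conv integrable_gamma_kernel integral_gamma_kernel)
  also have "\<dots> = integral\<^sup>L lborel (beta_kernel a b) * Gamma (a + b)"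
    using a b by (simp add: conv_gamma_kernel[abs_def] integral_gamma_kernel)
  finally show ?thesis
    using Gamma_nonzero[OF Re_pos_not_nonpos_Ints, of "a + b"] a b
    by (simp add: Beta_def field_simps)
qed

section \<open>Moments of the convolution\<close>

lemma phi2_nonzero_imp: "phi2 a b u \<noteq> 0 \<Longrightarrow> u \<in> {0<..<1}"
  unfolding phi2_def phi_def by (auto split: if_splits)

lemma phi2_minus_eq_shift: "phi2_minus (- w) w v = phi2 w (- w) (v + 1)"
  by (simp add: phi2_minus_def phi2_def add.commute mult.commute)

lemma power_mult_phi2_eq_beta_kernel:
  "of_real (u ^ k * (1 - u) ^ m) * phi2 w (- w) u
     = rGamma (1 + w) * rGamma (1 - w) * beta_kernel (of_nat k + 1 + w) (of_nat m + 1 - w) u"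
proof (cases "0 < u \<and> u < 1")
  case True
  have "of_nat m - w = of_nat m + (- w)"
    by simp
  then have "of_real u powr (of_nat k + w) = of_real u ^ k * (of_real u powr w :: complex)"
    and "of_real (1 - u) powr (of_nat m - w) = of_real (1 - u) ^ m * (of_real (1 - u) powr (- w) :: complex)"
    using True by (simp_all only: powr_add) (simp_all add: powr_nat' del: of_real_diff)
  then show ?thesis
    using True by (simp add: phi2_def phi_def beta_kernel_def algebra_simps del: of_real_diff)
next
  case False
  then show ?thesis
    by (auto simp: phi2_def phi_def beta_kernel_def)
qed

lemma
  assumes w: "\<bar>Re w\<bar> < 1"
  shows integrable_power_mult_phi2: "integrable lborel (\<lambda>u. of_real (u ^ k * (1 - u) ^ m) * phi2 w (- w) u)"
    and integral_power_mult_phi2: "(LINT u|lborel. of_real (u ^ k * (1 - u) ^ m) * phi2 w (- w) u)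
           = pochhammer (1 + w) k * pochhammer (1 - w) m / fact (k + m + 1)"
proof -
  have a: "0 < Re (of_nat k + 1 + w)" and b: "0 < Re (of_nat m + 1 - w)"
    using w by auto
  show "integrable lborel (\<lambda>u. of_real (u ^ k * (1 - u) ^ m) * phi2 w (- w) u)"
    unfolding power_mult_phi2_eq_beta_kernel using integrable_beta_kernel[OF a b] by simp
  have "(LINT u|lborel. of_real (u ^ k * (1 - u) ^ m) * phi2 w (- w) u)
          = rGamma (1 + w) * rGamma (1 - w) * Beta (of_nat k + 1 + w) (of_nat m + 1 - w)"
    unfolding power_mult_phi2_eq_beta_kernel using integral_beta_kernel[OF a b] by simp
  also have "\<dots> = pochhammer (1 + w) k * pochhammer (1 - w) m / fact (k + m + 1)"
  proof -
    have nonpos: "1 + w \<notin> \<int>\<^sub>\<le>\<^sub>0" "1 - w \<notin> \<int>\<^sub>\<le>\<^sub>0"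
      using w by (auto intro!: Re_pos_not_nonpos_Ints)
    have "Gamma (of_nat (k + m + 1) + 1) = (fact (k + m + 1) :: complex)"
      using Gamma_fact[of "k + m + 1"] by (simp add: add.commute)
    then show ?thesis
      using Gamma_nonzero[OF nonpos(1)] Gamma_nonzero[OF nonpos(2)]
      by (simp add: Beta_def pochhammer_Gamma[OF nonpos(1)] pochhammer_Gamma[OF nonpos(2)]
          rGamma_inverse_Gamma field_simps add_ac)
  qed
  finally show "(LINT u|lborel. of_real (u ^ k * (1 - u) ^ m) * phi2 w (- w) u)
           = pochhammer (1 + w) k * pochhammer (1 - w) m / fact (k + m + 1)" .
qed

lemma power_shifted_sum_binomial:
  fixes u w :: real
  shows "(u + w - 1) ^ l
    = (\<Sum>p\<le>l. real (l choose p) * (-1) ^ (l - p) * (u ^ p * (1 - u) ^ (l - p)) * (w ^ p * (1 - w) ^ (l - p)))"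
proof -
  have "u + w - 1 = u * w + (- ((1 - u) * (1 - w)))"
    by (simp add: algebra_simps)
  then have "(u + w - 1) ^ l = (\<Sum>p\<le>l. real (l choose p) * (u * w) ^ p * (- ((1 - u) * (1 - w))) ^ (l - p))"
    by (simp only: binomial_ring)
  also have "\<dots> = (\<Sum>p\<le>l. real (l choose p) * (-1) ^ (l - p) * (u ^ p * (1 - u) ^ (l - p)) * (w ^ p * (1 - w) ^ (l - p)))"
    by (intro sum.cong refl) (simp only: power_minus[of "(1 - u) * (1 - w)"] power_mult_distrib ac_simps)
  finally show ?thesis .
qed

lemma norm_power_mult_power_le_1:
  fixes u :: real
  assumes "u \<in> {0..1}"
  shows "norm (of_real (u ^ p * (1 - u) ^ q) :: complex) \<le> 1"
proof -
  have "0 \<le> u ^ p * (1 - u) ^ q" "u ^ p * (1 - u) ^ q \<le> 1"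
    using assms by (simp_all add: power_le_one mult_le_one)
  then show ?thesis
    by (simp only: norm_of_real abs_of_nonneg)
qed

lemma integral_conv_shifted_power:
  fixes f g :: "real \<Rightarrow> complex"
  assumes f: "integrable lborel f" and g: "integrable lborel g"
    and f0: "\<And>u. f u \<noteq> 0 \<Longrightarrow> u \<in> {0..1}" and g0: "\<And>w. g w \<noteq> 0 \<Longrightarrow> w \<in> {0..1}"
  shows "(LINT y|lborel. of_real ((y - 1) ^ l) * conv f g y)
    = (\<Sum>p\<le>l. of_nat (l choose p) * (-1) ^ (l - p)
         * (LINT u|lborel. of_real (u ^ p * (1 - u) ^ (l - p)) * f u)
         * (LINT w|lborel. of_real (w ^ p * (1 - w) ^ (l - p)) * g w))"
proof -
  have weighted: "integrable lborel (\<lambda>u. of_real (u ^ p * (1 - u) ^ q) * h u)"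
    if "integrable lborel h" "\<And>u. h u \<noteq> 0 \<Longrightarrow> u \<in> {0..1}" for h :: "real \<Rightarrow> complex" and p q
    using that by (intro integrable_bounded_mult[where C = 1] norm_power_mult_power_le_1) auto
  define c where "c p = (of_nat (l choose p) * (-1) ^ (l - p) :: complex)" for p
  define G where "G p = (LINT w|lborel. of_real (w ^ p * (1 - w) ^ (l - p)) * g w)" for p
  have bound: "norm (of_real ((u + w - 1) ^ l) :: complex) \<le> 1" if "f u \<noteq> 0" "g w \<noteq> 0" for u w
    using f0[OF that(1)] g0[OF that(2)]
    by (simp only: norm_of_real power_abs) (intro power_le_one; auto)
  have inner: "(LINT w|lborel. of_real ((u + w - 1) ^ l) * g w)
                 = (\<Sum>p\<le>l. c p * of_real (u ^ p * (1 - u) ^ (l - p)) * G p)" for u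
  proof -
    have "of_real ((u + w - 1) ^ l) * g w
            = (\<Sum>p\<le>l. c p * of_real (u ^ p * (1 - u) ^ (l - p)) * (of_real (w ^ p * (1 - w) ^ (l - p)) * g w))" for w
      unfolding power_shifted_sum_binomial c_def of_real_sum sum_distrib_right
      by (intro sum.cong refl) (simp add: mult_ac)
    then show ?thesis
      unfolding G_def using weighted[OF g g0]
      by (simp add: Bochner_Integration.integral_sum)
  qed
  have "(LINT y|lborel. of_real ((y - 1) ^ l) * conv f g y)
          = (LINT u|lborel. f u * (LINT w|lborel. of_real ((u + w - 1) ^ l) * g w))"
    using integral_mult_conv(2)[where h = "\<lambda>y. of_real ((y - 1) ^ l)", OF f g _ bound] by simp
  also have "\<dots> = (\<Sum>p\<le>l. c p * (LINT u|lborel. of_real (u ^ p * (1 - u) ^ (l - p)) * f u) * G p)"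
  proof -
    have "f u * (\<Sum>p\<le>l. c p * of_real (u ^ p * (1 - u) ^ (l - p)) * G p)
            = (\<Sum>p\<le>l. c p * G p * (of_real (u ^ p * (1 - u) ^ (l - p)) * f u))" for u
      by (simp add: sum_distrib_left mult_ac)
    then show ?thesis
      unfolding inner using weighted[OF f f0]
      by (simp add: Bochner_Integration.integral_sum mult_ac)
  qed
  finally show ?thesis
    by (simp add: c_def G_def mult_ac)
qed

(* The factorials are written fact (p + (l - p) + 1) so that the factors match
   integral_power_mult_phi2 literally. *)
lemma sigma1_moment_mult_eq_1:
  assumes "z * z' = 1"
  shows "sigma1_moment z z' l
    = (\<Sum>p\<le>l. of_nat (l choose p) * (-1) ^ (l - p)
         * (pochhammer (1 + z) p * pochhammer (1 - z) (l - p) / fact (p + (l - p) + 1))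
         * (pochhammer (1 + z') p * pochhammer (1 - z') (l - p) / fact (p + (l - p) + 1)))"
  unfolding sigma1_moment_def Let_def assms atLeast0AtMost
proof (intro sum.cong refl)
  fix p assume "p \<in> {..l}"
  then have p: "p \<le> l" and l: "p + (l - p) + 1 = l + 1"
    by auto
  have "(of_nat (l choose p) :: complex) = fact l / (fact p * fact (l - p))"
    using binomial_fact[OF p] by simp
  moreover have "(fact (l + 1) :: complex) = of_nat (l + 1) * fact l"
    by simp
  ultimately show "(-1) ^ (l - p) * 1 * pochhammer (z + 1) p * pochhammer (- z + 1) (l - p)
        * pochhammer (z' + 1) p * pochhammer (- z' + 1) (l - p)
        / (pochhammer 1 (p + (l - p) + 1) * of_nat (p + (l - p) + 1) * fact p * fact (l - p))
      = of_nat (l choose p) * (-1) ^ (l - p)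
         * (pochhammer (1 + z) p * pochhammer (1 - z) (l - p) / fact (p + (l - p) + 1))
         * (pochhammer (1 + z') p * pochhammer (1 - z') (l - p) / fact (p + (l - p) + 1))"
    unfolding l pochhammer_fact[symmetric]
    by (simp add: field_simps add.commute del: of_nat_Suc)
qed

lemma integrable_phi2:
  assumes "\<bar>Re w\<bar> < 1"
  shows "integrable lborel (phi2 w (- w))"
  using integrable_power_mult_phi2[OF assms, of 0 0] by simp

lemma conv_phi2_phi2_minus:
  "conv (phi2 z (- z)) (phi2_minus (- z') z') x = conv (phi2 z (- z)) (phi2 z' (- z')) (x + 1)"
proof -
  have "phi2_minus (- z') z' = (\<lambda>v. phi2 z' (- z') (v + 1))"
    by (simp add: fun_eq_iff phi2_minus_eq_shift)
  then show ?thesis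
    by (simp add: conv_shift)
qed

lemma conv_phi2_phi2_minus_nonzero_imp:
  assumes "conv (phi2 z (- z)) (phi2_minus (- z') z') x \<noteq> 0"
  shows "x \<in> {-1..1}"
proof -
  obtain u where "phi2 z (- z) u \<noteq> 0" "phi2 z' (- z') (x + 1 - u) \<noteq> 0"
    using assms unfolding conv_phi2_phi2_minus by (rule conv_nonzero_imp)
  then show ?thesis
    using phi2_nonzero_imp[of z "- z" u] phi2_nonzero_imp[of z' "- z'" "x + 1 - u"] by auto
qed

lemma integrable_conv_phi2_phi2_minus:
  assumes "\<bar>Re z\<bar> < 1" "\<bar>Re z'\<bar> < 1"
  shows "integrable lborel (conv (phi2 z (- z)) (phi2_minus (- z') z'))"
proof -
  have "integrable lborel (conv (phi2 z (- z)) (phi2 z' (- z')))"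
    using integrable_conv[OF integrable_phi2 integrable_phi2] assms .
  then show ?thesis
    unfolding conv_phi2_phi2_minus[abs_def]
    using lborel_integrable_real_affine[of _ 1 1] by (simp add: add.commute)
qed

lemma integral_power_mult_conv_phi2_phi2_minus:
  assumes z: "\<bar>Re z\<bar> < 1" and z': "\<bar>Re z'\<bar> < 1" and t1: "z * z' = 1"
  shows "(LINT x|lborel. of_real (x ^ l) * conv (phi2 z (- z)) (phi2_minus (- z') z') x) = sigma1_moment z z' l"
proof -
  let ?h = "conv (phi2 z (- z)) (phi2 z' (- z'))"
  have "(LINT x|lborel. of_real (x ^ l) * conv (phi2 z (- z)) (phi2_minus (- z') z') x)
          = (LINT y|lborel. of_real ((y - 1) ^ l) * ?h y)"
    unfolding conv_phi2_phi2_minus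
    using lborel_integral_real_affine[of 1 "\<lambda>y. of_real ((y - 1) ^ l) * ?h y" 1] by (simp add: add.commute)
  also have "\<dots> = sigma1_moment z z' l"
    unfolding sigma1_moment_mult_eq_1[OF t1]
      integral_power_mult_phi2[OF z, symmetric] integral_power_mult_phi2[OF z', symmetric]
    by (rule integral_conv_shifted_power[OF integrable_phi2[OF z] integrable_phi2[OF z']])
      (auto dest: phi2_nonzero_imp)
  finally show ?thesis .
qed

section \<open>Densities with compact support are determined by their moments\<close>

lemma eq_0_if_norm_le_epsilon_mult:
  fixes d :: "'a::real_normed_vector"
  assumes C: "0 \<le> C" and le: "\<And>e. 0 < e \<Longrightarrow> norm d \<le> e * C"
  shows "d = 0"
proof -
  have "norm d \<le> 0 + e" if "0 < e" for e
  proof -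
    have "norm d \<le> e / (C + 1) * C"
      using le[of "e / (C + 1)"] that C by simp
    also have "\<dots> \<le> e"
      using that C by (simp add: field_simps)
    finally show ?thesis
      by simp
  qed
  then show ?thesis
    using field_le_epsilon[of "norm d" 0] by simp
qed

locale moment_matching = finite_measure \<mu>
  for \<mu> :: "real measure" +
  fixes h :: "real \<Rightarrow> complex" and K :: "real set"
  assumes sets_eq: "sets \<mu> = sets borel"
    and compact: "compact K"
    and null: "emeasure \<mu> (- K) = 0"
    and integrable_h: "integrable lborel h"
    and support_h: "\<And>x. h x \<noteq> 0 \<Longrightarrow> x \<in> K"
    and moments: "\<And>l. of_real (integral\<^sup>L \<mu> (\<lambda>x. x ^ l)) = (LINT x|lborel. of_real (x ^ l) * h x)"
begin

lemma AE_in_K: "AE x in \<mu>. x \<in> K"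
  using compact_imp_closed[OF compact] null by (intro AE_I[of _ _ "- K"]) (auto simp: sets_eq)

lemma continuous_bounded_on_K:
  fixes f :: "real \<Rightarrow> 'b::real_normed_vector"
  assumes "continuous_on UNIV f"
  shows "\<exists>B. \<forall>x\<in>K. norm (f x) \<le> B"
proof -
  have "bounded (f ` K)"
    using compact_continuous_image[OF continuous_on_subset[OF assms] compact] compact_imp_bounded by auto
  then show ?thesis
    by (auto simp: bounded_iff)
qed

lemma continuous_measurable:
  fixes f :: "real \<Rightarrow> 'b::{banach, second_countable_topology}"
  assumes "continuous_on UNIV f"
  shows "f \<in> borel_measurable \<mu>"
  using borel_measurable_continuous_onI[OF assms] by (simp add: measurable_cong_sets[OF sets_eq refl])

lemma integrable_continuous:
  fixes f :: "real \<Rightarrow> 'b::{banach, second_countable_topology}"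
  assumes f: "continuous_on UNIV f"
  shows "integrable \<mu> f"
proof -
  obtain B where B: "\<And>x. x \<in> K \<Longrightarrow> norm (f x) \<le> B"
    using continuous_bounded_on_K[OF f] by blast
  have "AE x in \<mu>. norm (f x) \<le> B"
    using AE_in_K by eventually_elim (rule B)
  then show ?thesis
    using integrable_const_bound continuous_measurable[OF f] by blast
qed

lemma integrable_continuous_mult_h:
  fixes f :: "real \<Rightarrow> complex"
  assumes f: "continuous_on UNIV f"
  shows "integrable lborel (\<lambda>x. f x * h x)"
proof -
  obtain B where "\<And>x. x \<in> K \<Longrightarrow> norm (f x) \<le> B"
    using continuous_bounded_on_K[OF f] by blast
  then show ?thesis
    using integrable_h borel_measurable_continuous_onI[OF f] support_h
    by (intro integrable_bounded_mult[where C = B]) auto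
qed

lemma norm_integral_le_on_K:
  fixes f :: "real \<Rightarrow> 'b::{banach, second_countable_topology}"
  assumes f: "continuous_on UNIV f" and le: "\<And>x. x \<in> K \<Longrightarrow> norm (f x) \<le> e"
  shows "norm (integral\<^sup>L \<mu> f) \<le> e * measure \<mu> (space \<mu>)"
proof -
  have "AE x in \<mu>. norm (f x) \<le> e"
    using AE_in_K by eventually_elim (rule le)
  then have "norm (integral\<^sup>L \<mu> f) \<le> (\<integral>x. e \<partial>\<mu>)"
    using integrable_continuous[OF f] by (intro order_trans[OF integral_norm_bound] integral_mono_AE) auto
  then show ?thesis
    by (simp add: mult.commute)
qed

lemma norm_integral_mult_h_le_on_K:
  fixes f :: "real \<Rightarrow> complex"
  assumes f: "continuous_on UNIV f" and le: "\<And>x. x \<in> K \<Longrightarrow> norm (f x) \<le> e"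
  shows "norm (LINT x|lborel. f x * h x) \<le> e * (LINT x|lborel. norm (h x))"
proof -
  have "norm (f x * h x) \<le> e * norm (h x)" for x
    using le[OF support_h, of x] by (cases "h x = 0") (auto simp: norm_mult intro: mult_right_mono)
  then have "norm (LINT x|lborel. f x * h x) \<le> (LINT x|lborel. e * norm (h x))"
    using integrable_continuous_mult_h[OF f] integrable_h
    by (intro order_trans[OF integral_norm_bound] integral_mono) auto
  then show ?thesis
    by simp
qed

lemma integral_real_polynomial_eq:
  assumes "real_polynomial_function g"
  shows "of_real (integral\<^sup>L \<mu> g) = (LINT x|lborel. of_real (g x) * h x)"
proof -
  obtain a n where g: "g = (\<lambda>x. \<Sum>i\<le>n. a i * x ^ i)"
    using real_polynomial_function_imp_sum[OF assms] by blast
  have power_int: "integrable \<mu> (\<lambda>x. x ^ i)" for i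
    by (intro integrable_continuous continuous_intros)
  have power_h_int: "integrable lborel (\<lambda>x. of_real (x ^ i) * h x)" for i
    by (intro integrable_continuous_mult_h continuous_intros)
  have "integral\<^sup>L \<mu> g = (\<Sum>i\<le>n. a i * integral\<^sup>L \<mu> (\<lambda>x. x ^ i))"
    unfolding g using power_int by (simp add: Bochner_Integration.integral_sum)
  then have "of_real (integral\<^sup>L \<mu> g) = (\<Sum>i\<le>n. of_real (a i) * of_real (integral\<^sup>L \<mu> (\<lambda>x. x ^ i)))"
    by simp
  also have "\<dots> = (\<Sum>i\<le>n. of_real (a i) * (LINT x|lborel. of_real (x ^ i) * h x))"
    by (simp add: moments)
  also have "\<dots> = (LINT x|lborel. (\<Sum>i\<le>n. of_real (a i) * (of_real (x ^ i) * h x)))"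
    using power_h_int by (simp add: Bochner_Integration.integral_sum)
  also have "\<dots> = (LINT x|lborel. of_real (g x) * h x)"
    unfolding g by (simp add: sum_distrib_right mult.assoc)
  finally show ?thesis .
qed

lemma integral_continuous_real_eq:
  fixes \<phi> :: "real \<Rightarrow> real"
  assumes \<phi>: "continuous_on UNIV \<phi>"
  shows "of_real (integral\<^sup>L \<mu> \<phi>) = (LINT x|lborel. of_real (\<phi> x) * h x)"
proof -
  let ?d = "of_real (integral\<^sup>L \<mu> \<phi>) - (LINT x|lborel. of_real (\<phi> x) * h x)"
  have "norm ?d \<le> e * (measure \<mu> (space \<mu>) + (LINT x|lborel. norm (h x)))" if e: "0 < e" for e
  proof -
    obtain g where g: "real_polynomial_function g" and close: "\<And>x. x \<in> K \<Longrightarrow> \<bar>\<phi> x - g x\<bar> < e"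
      using Stone_Weierstrass_real_polynomial_function[OF compact continuous_on_subset[OF \<phi>] e] by blast
    have g_cont: "continuous_on UNIV g"
      using g by (simp add: real_polynomial_function_eq continuous_on_polymonial_function)
    have diff_cont: "continuous_on UNIV (\<lambda>x. \<phi> x - g x)"
      using \<phi> g_cont by (intro continuous_intros)
    have of_real_cont: "continuous_on UNIV (\<lambda>x. complex_of_real (f x))" if "continuous_on UNIV f" for f
      using that by (intro continuous_intros)
    have "integral\<^sup>L \<mu> (\<lambda>x. \<phi> x - g x) = integral\<^sup>L \<mu> \<phi> - integral\<^sup>L \<mu> g"
      using integrable_continuous[OF \<phi>] integrable_continuous[OF g_cont] by simp
    moreover have "(LINT x|lborel. of_real (\<phi> x - g x) * h x)
        = (LINT x|lborel. of_real (\<phi> x) * h x) - (LINT x|lborel. of_real (g x) * h x)"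
      using integrable_continuous_mult_h[OF of_real_cont[OF \<phi>]] integrable_continuous_mult_h[OF of_real_cont[OF g_cont]]
      by (simp add: left_diff_distrib)
    ultimately have "?d = of_real (integral\<^sup>L \<mu> (\<lambda>x. \<phi> x - g x)) - (LINT x|lborel. of_real (\<phi> x - g x) * h x)"
      by (simp add: integral_real_polynomial_eq[OF g])
    also have "norm \<dots> \<le> norm (integral\<^sup>L \<mu> (\<lambda>x. \<phi> x - g x)) + norm (LINT x|lborel. of_real (\<phi> x - g x) * h x)"
      using norm_triangle_ineq4[of "complex_of_real (integral\<^sup>L \<mu> (\<lambda>x. \<phi> x - g x))"]
      by (simp only: norm_of_real real_norm_def)
    also have "\<dots> \<le> e * measure \<mu> (space \<mu>) + e * (LINT x|lborel. norm (h x))"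
    proof (rule add_mono)
      show "norm (integral\<^sup>L \<mu> (\<lambda>x. \<phi> x - g x)) \<le> e * measure \<mu> (space \<mu>)"
        by (rule norm_integral_le_on_K[OF diff_cont]) (use close in \<open>simp add: less_imp_le\<close>)
      show "norm (LINT x|lborel. of_real (\<phi> x - g x) * h x) \<le> e * (LINT x|lborel. norm (h x))"
        by (rule norm_integral_mult_h_le_on_K[OF of_real_cont[OF diff_cont]])
          (use close in \<open>simp add: less_imp_le flip: of_real_diff\<close>)
    qed
    finally show ?thesis
      by (simp add: distrib_left)
  qed
  then have "?d = 0"
    by (intro eq_0_if_norm_le_epsilon_mult[of "measure \<mu> (space \<mu>) + (LINT x|lborel. norm (h x))"]) auto
  then show ?thesis
    by simp
qed

lemma integral_continuous_eq:
  fixes \<psi> :: "real \<Rightarrow> complex"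
  assumes \<psi>: "continuous_on UNIV \<psi>"
  shows "integral\<^sup>L \<mu> \<psi> = (LINT x|lborel. \<psi> x * h x)"
proof -
  have Re_cont: "continuous_on UNIV (\<lambda>x. Re (\<psi> x))" and Im_cont: "continuous_on UNIV (\<lambda>x. Im (\<psi> x))"
    using \<psi> by (auto intro: continuous_intros)
  have of_real_cont: "continuous_on UNIV (\<lambda>x. complex_of_real (f x))" if "continuous_on UNIV f" for f
    using that by (intro continuous_intros)
  have "integral\<^sup>L \<mu> \<psi> = integral\<^sup>L \<mu> (\<lambda>x. of_real (Re (\<psi> x)) + \<i> * of_real (Im (\<psi> x)))"
    by (rule Bochner_Integration.integral_cong) (simp_all add: complex_eq_iff)
  also have "\<dots> = of_real (integral\<^sup>L \<mu> (\<lambda>x. Re (\<psi> x))) + \<i> * of_real (integral\<^sup>L \<mu> (\<lambda>x. Im (\<psi> x)))"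
    using integrable_continuous[OF of_real_cont[OF Re_cont]] integrable_continuous[OF of_real_cont[OF Im_cont]]
    by simp
  also have "\<dots> = (LINT x|lborel. of_real (Re (\<psi> x)) * h x) + \<i> * (LINT x|lborel. of_real (Im (\<psi> x)) * h x)"
    by (simp add: integral_continuous_real_eq Re_cont Im_cont)
  also have "\<dots> = (LINT x|lborel. (of_real (Re (\<psi> x)) + \<i> * of_real (Im (\<psi> x))) * h x)"
    using integrable_continuous_mult_h[OF of_real_cont[OF Re_cont]] integrable_continuous_mult_h[OF of_real_cont[OF Im_cont]]
    by (simp add: distrib_right mult.assoc)
  also have "\<dots> = (LINT x|lborel. \<psi> x * h x)"
    by (rule Bochner_Integration.integral_cong) (simp_all add: complex_eq_iff)
  finally show ?thesis .
qed

end

section \<open>Admissible parameters with product one\<close>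

lemma mult_eq_1_not_in_same_unit_interval:
  fixes x y :: real and m :: int
  assumes xy: "x * y = 1" and x: "of_int m < x" "x < of_int m + 1" and y: "of_int m < y" "y < of_int m + 1"
  shows False
proof -
  consider "1 \<le> m" | "m = 0" | "m = -1" | "m \<le> -2"
    by linarith
  then show False
  proof cases
    case 1
    then have "1 < x" "1 < y"
      using x y by linarith+
    then have "1 < x * y"
      by (rule less_1_mult)
    then show False
      using xy by simp
  next
    case 2
    then have "x * y < 1 * 1"
      using x y by (intro mult_strict_mono) auto
    then show False
      using xy by simp
  next
    case 3
    then have "(- x) * (- y) < 1 * 1"
      using x y by (intro mult_strict_mono) auto
    then show False
      using xy by simp
  next
    case 4
    then have "1 < - x" "1 < - y"
      using x y by linarith+
    then have "1 < (- x) * (- y)"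
      by (rule less_1_mult)
    then show False
      using xy by simp
  qed
qed

lemma admissible_mult_eq_1:
  assumes adm: "admissible z z'" and t1: "z * z' = 1"
  shows "z' = cnj z \<and> \<bar>Re z\<bar> < 1"
  using adm unfolding admissible_def
proof (elim disjE conjE exE)
  assume z': "z' = cnj z" and z: "z \<notin> \<int>"
  have "complex_of_real ((Re z)\<^sup>2 + (Im z)\<^sup>2) = 1"
    using t1 complex_mult_cnj[of z] by (simp add: z')
  then have norm1: "(Re z)\<^sup>2 + (Im z)\<^sup>2 = 1"
    by (simp only: of_real_eq_1_iff)
  have "\<bar>Re z\<bar> \<noteq> 1"
  proof
    assume a: "\<bar>Re z\<bar> = 1"
    then have "(Re z)\<^sup>2 = 1"
      using power2_abs[of "Re z"] by simp
    then have "Im z = 0"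
      using norm1 by simp
    moreover have "Re z = 1 \<or> Re z = -1"
      using a by (cases "0 \<le> Re z") auto
    ultimately have "z = 1 \<or> z = -1"
      by (auto simp: complex_eq_iff)
    then show False
      using z by auto
  qed
  moreover have "(Re z)\<^sup>2 \<le> 1"
    using norm1 zero_le_power2[of "Im z"] by linarith
  then have "\<bar>Re z\<bar> \<le> 1"
    by (simp add: abs_square_le_1)
  ultimately show ?thesis
    using z' by simp
next
  fix m :: int
  assume "z \<in> \<real>" "z' \<in> \<real>" "of_int m < Re z" "Re z < of_int m + 1" "of_int m < Re z'" "Re z' < of_int m + 1"
  moreover have "Re z * Re z' = 1"
    using arg_cong[OF t1, of Re] \<open>z \<in> \<real>\<close> \<open>z' \<in> \<real>\<close> by (simp add: complex_is_Real_iff)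
  ultimately show ?thesis
    using mult_eq_1_not_in_same_unit_interval by blast
qed

lemma test_function_continuous:
  assumes "test_function \<psi>"
  shows "continuous_on UNIV \<psi>"
proof -
  obtain D where D: "D 0 = \<psi>" "\<And>k x. (D k has_vector_derivative D (Suc k) x) (at x)"
    using assms unfolding test_function_def by blast
  have "isCont (D 0) x" for x
    by (rule has_vector_derivative_continuous[OF D(2)])
  then show ?thesis
    by (simp add: D(1) continuous_at_imp_continuous_on)
qed

lemma moment_matching_conv_phi2_phi2_minus:
  assumes adm: "admissible z z'" and t1: "z * z' = 1"
    and sets_mu: "sets \<mu> = sets borel" and fin: "finite_measure \<mu>"
    and supp: "emeasure \<mu> (- {-1..1}) = 0"
    and moments: "\<forall>l::nat. complex_of_real (integral\<^sup>L \<mu> (\<lambda>x. x ^ l)) = sigma1_moment z z' l"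
  shows "moment_matching \<mu> (conv (phi2 z (- z)) (phi2_minus (- z') z')) {-1..1}"
proof (intro moment_matching.intro[OF fin] moment_matching_axioms.intro)
  have z: "\<bar>Re z\<bar> < 1" and z': "\<bar>Re z'\<bar> < 1"
    using admissible_mult_eq_1[OF adm t1] by auto
  show "integrable lborel (conv (phi2 z (- z)) (phi2_minus (- z') z'))"
    by (rule integrable_conv_phi2_phi2_minus[OF z z'])
  show "x \<in> {-1..1}" if "conv (phi2 z (- z)) (phi2_minus (- z') z') x \<noteq> 0" for x
    using that by (rule conv_phi2_phi2_minus_nonzero_imp)
  show "of_real (integral\<^sup>L \<mu> (\<lambda>x. x ^ l))
          = (LINT x|lborel. of_real (x ^ l) * conv (phi2 z (- z)) (phi2_minus (- z') z') x)" for l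
    using moments integral_power_mult_conv_phi2_phi2_minus[OF z z' t1] by simp
qed (use sets_mu supp in simp_all)

theorem corollary5p4:
  fixes z z' :: complex and \<mu> :: "real measure"
  assumes adm: "admissible z z'"
    and t1: "z * z' = 1"
    and sets_mu: "sets \<mu> = sets borel"
    and fin: "finite_measure \<mu>"
    and supp: "emeasure \<mu> (- {-1..1}) = 0"
    and moments: "\<forall>l::nat. complex_of_real (integral\<^sup>L \<mu> (\<lambda>x. x ^ l)) = sigma1_moment z z' l"
  shows "\<forall>\<psi>. test_function \<psi> \<longrightarrow>
           integrable lborel (\<lambda>x. \<psi> x * conv (phi2 z (- z)) (phi2_minus (- z') z') x) \<and>
           integral\<^sup>L \<mu> \<psi> = (LINT x|lborel. \<psi> x * conv (phi2 z (- z)) (phi2_minus (- z') z') x)"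
proof (intro allI impI conjI)
  fix \<psi> :: "real \<Rightarrow> complex"
  assume "test_function \<psi>"
  then have \<psi>: "continuous_on UNIV \<psi>"
    by (rule test_function_continuous)
  interpret moment_matching \<mu> "conv (phi2 z (- z)) (phi2_minus (- z') z')" "{-1..1}"
    using adm t1 sets_mu fin supp moments by (rule moment_matching_conv_phi2_phi2_minus)
  show "integrable lborel (\<lambda>x. \<psi> x * conv (phi2 z (- z)) (phi2_minus (- z') z') x)"
    by (rule integrable_continuous_mult_h[OF \<psi>])
  show "integral\<^sup>L \<mu> \<psi> = (LINT x|lborel. \<psi> x * conv (phi2 z (- z)) (phi2_minus (- z') z') x)"
    by (rule integral_continuous_eq[OF \<psi>])
qed

end
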